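(* Let $n\geq2$, $p=2n-1$, $q=n$ and $k>\frac{2n-1}{n\sqrt{n-1}}$. Then the critical velocity is $$\overline{c}=\frac{kn+\sqrt{k^2n^2-4n}}{2n}.$$
   Context: Consider $u_t=u_{xx}+k(u^n)_x+u^p-u^q$; traveling waves $u=f(x+ct)$ satisfy $f''=cf'-knf^{n-1}f'-f^p+f^q$, equivalently the system $X'=Y$, $Y'=cY-knX^{n-1}Y-X^p+X^q$ ($X=f$, $Y=f'$) with critical points $P_1=(0,0)$, $P_2=(1,0)$. For each $c$, $l_c$ is the unique trajectory leaving $P_1$ (as $\xi\to-\infty$) into $\{X>0,Y>0\}$; it connects directly $P_1$ to $P_2$ if it tends to $P_2$ as $\xi\to\infty$ with $X>0,Y>0$ throughout. The critical velocity is $\overline{c}=\sup\{c: l_c\text{ connects directly }P_1\text{ and }P_2\}$. *)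

theory Defs
  imports "HOL-Analysis.Analysis"
begin

text \<open>Traveling-wave system  X' = Y,  Y' = cY - k n X^(n-1) Y - X^p + X^q,
  with real exponents (only used where X > 0).\<close>

definition tw_solution :: "real \<Rightarrow> real \<Rightarrow> real \<Rightarrow> real \<Rightarrow> real \<Rightarrow>
    (real \<Rightarrow> real) \<Rightarrow> (real \<Rightarrow> real) \<Rightarrow> bool" where
  "tw_solution n k p q c X Y \<longleftrightarrow>
     (\<forall>\<xi>. (X has_real_derivative Y \<xi>) (at \<xi>) \<and>
          (Y has_real_derivative
             (c * Y \<xi> - k * n * X \<xi> powr (n - 1) * Y \<xi> - X \<xi> powr p + X \<xi> powr q)) (at \<xi>))"

text \<open>l_c connects P1=(0,0) directly to P2=(1,0): there is a trajectory of the system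
  lying in the open first quadrant for all \<xi>, tending to P1 as \<xi> \<rightarrow> -\<infinity> and to P2
  as \<xi> \<rightarrow> +\<infinity>.  (By the uniqueness of the trajectory l_c leaving P1 into the open
  first quadrant, such a trajectory is necessarily l_c.)\<close>

definition connects_directly :: "real \<Rightarrow> real \<Rightarrow> real \<Rightarrow> real \<Rightarrow> real \<Rightarrow> bool" where
  "connects_directly n k p q c \<longleftrightarrow>
     (\<exists>X Y. tw_solution n k p q c X Y \<and>
        (\<forall>\<xi>. X \<xi> > 0 \<and> Y \<xi> > 0) \<and>
        (X \<longlongrightarrow> 0) at_bot \<and> (Y \<longlongrightarrow> 0) at_bot \<and>
        (X \<longlongrightarrow> 1) at_top \<and> (Y \<longlongrightarrow> 0) at_top)"

definition critical_velocity :: "real \<Rightarrow> real \<Rightarrow> real \<Rightarrow> real \<Rightarrow> real" where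
  "critical_velocity n k p q = Sup {c. connects_directly n k p q c}"

end

theory Submission
  imports Defs "HOL-Library.Quadratic_Discriminant" "HOL-Real_Asymp.Real_Asymp"
begin

text \<open>The critical speed is the larger root \<open>C\<close> of \<open>n C\<^sup>2 - k n C + 1 = 0\<close>. For this
  root the curve \<open>Y = C (X - X\<^sup>n)\<close> is invariant, and on it the Bernoulli equation
  \<open>X' = C (X - X\<^sup>n)\<close> has an explicit solution running from \<open>P\<^sub>1\<close> to \<open>P\<^sub>2\<close>.
  For \<open>c > C\<close> the deviation \<open>z = Y - C (X - X\<^sup>n)\<close> of a connecting orbit satisfies
  \<open>z' = (c - C) Y - X\<^sup>n\<^sup>-\<^sup>1 z / C\<close>, so, vanishing at \<open>-\<infinity>\<close>, it stays positive.
  The hypothesis on \<open>k\<close> says exactly that the quadratic is negative at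
  \<open>1 / sqrt (n - 1)\<close>, i.e. \<open>C\<^sup>2 (n - 1) > 1\<close>: near \<open>P\<^sub>2\<close> the invariant curve then lies
  above the chord \<open>Y = (1 - X) / C\<close>, and the ratio \<open>(1 - X) / z\<close> would have to decrease at
  least at unit rate while staying positive.\<close>

lemma quadratic_neg_imp_less_larger_root:
  fixes a b c x :: real
  assumes "a > 0" and "a * x\<^sup>2 + b * x + c < 0"
  shows "discrim a b c > 0" and "x < (- b + sqrt (discrim a b c)) / (2 * a)"
proof -
  have "(2 * a * x + b)\<^sup>2 = 4 * a * (a * x\<^sup>2 + b * x + c) + discrim a b c"
    by (simp add: discrim_def power2_eq_square algebra_simps)
  also have "\<dots> < discrim a b c"
    using assms by (simp add: mult_pos_neg)
  finally have sq_less: "(2 * a * x + b)\<^sup>2 < discrim a b c" .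
  then show "discrim a b c > 0"
    using zero_le_power2[of "2 * a * x + b"] by linarith
  from sq_less have "2 * a * x + b < sqrt (discrim a b c)"
    by (rule real_less_rsqrt)
  then show "x < (- b + sqrt (discrim a b c)) / (2 * a)"
    using \<open>a > 0\<close> by (simp add: field_simps)
qed

definition front_speed :: "real \<Rightarrow> real \<Rightarrow> real" where
  "front_speed n k = (k * n + sqrt (k\<^sup>2 * n\<^sup>2 - 4 * n)) / (2 * n)"

lemma front_speed_eq_larger_root:
  "front_speed n k = (- (- k * n) + sqrt (discrim n (- k * n) 1)) / (2 * n)"
  by (simp add: front_speed_def discrim_def power_mult_distrib)

lemma front_speed_root:
  fixes n k :: real
  assumes "n \<noteq> 0" and "4 * n \<le> k\<^sup>2 * n\<^sup>2"
  shows "n * (front_speed n k)\<^sup>2 - k * n * front_speed n k + 1 = 0"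
proof -
  have "discrim n (- k * n) 1 \<ge> 0"
    using assms(2) by (simp add: discrim_def power_mult_distrib)
  then have "n * (front_speed n k)\<^sup>2 + (- k * n) * front_speed n k + 1 = 0"
    using discriminant_nonneg[OF assms(1)] unfolding front_speed_eq_larger_root by blast
  then show ?thesis by simp
qed

lemma inverse_sqrt_less_front_speed:
  fixes n k :: real
  assumes "n > 1" and "k > (2 * n - 1) / (n * sqrt (n - 1))"
  shows "4 * n < k\<^sup>2 * n\<^sup>2" and "1 / sqrt (n - 1) < front_speed n k"
proof -
  define s where "s = sqrt (n - 1)"
  have "n > 0" using assms(1) by simp
  have s: "s > 0" "s\<^sup>2 = n - 1" using assms(1) by (simp_all add: s_def)
  have "2 * n - 1 < k * (n * s)"
    using assms s(1) by (simp add: s_def divide_less_eq mult.commute)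
  moreover have "s\<^sup>2 * (n * (1 / s)\<^sup>2 + (- k * n) * (1 / s) + 1) = n - k * (n * s) + s\<^sup>2"
    using s(1) by (simp add: field_simps power2_eq_square)
  ultimately have "s\<^sup>2 * (n * (1 / s)\<^sup>2 + (- k * n) * (1 / s) + 1) < 0"
    using s(2) by simp
  then have "n * (1 / s)\<^sup>2 + (- k * n) * (1 / s) + 1 < 0"
    using s(1) by (simp add: mult_less_0_iff)
  from quadratic_neg_imp_less_larger_root[OF \<open>n > 0\<close> this]
  show "4 * n < k\<^sup>2 * n\<^sup>2" and "1 / sqrt (n - 1) < front_speed n k"
    by (simp_all add: discrim_def power_mult_distrib s_def front_speed_eq_larger_root)
qed

text \<open>The right-hand side is the derivative of \<open>z = y - C (x - x\<^sup>n)\<close> along the flow; for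
  \<open>c = C\<close> it vanishes on \<open>z = 0\<close>.\<close>

lemma tw_field_decomposition:
  fixes n k c C x y :: real
  assumes "x > 0" and root: "n * C\<^sup>2 - k * n * C + 1 = 0"
  shows "c * y - k * n * x powr (n - 1) * y - x powr (2 * n - 1) + x powr n
           - C * (y - n * x powr (n - 1) * y)
         = (c - C) * y - x powr (n - 1) * (y - C * (x - x powr n)) / C"
proof -
  define P where "P = x powr (n - 1)"
  have xn: "x powr n = x * P"
    using powr_mult_base[of x "n - 1"] \<open>x > 0\<close> by (simp add: P_def)
  have "x powr (2 * n - 1) = x powr (1 + (n - 1) + (n - 1))"
    by (rule arg_cong[where f = "(powr) x"]) simp
  also have "\<dots> = x * P * P"
    using \<open>x > 0\<close> by (simp only: P_def powr_add powr_one less_imp_le)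
  finally have x2n: "x powr (2 * n - 1) = x * P * P" .
  have C: "C \<noteq> 0" using root by auto
  have "n * (C - k) = - 1 / C"
    using root C by (simp add: field_simps power2_eq_square)
  moreover have "c * y - k * n * P * y - x * P * P + x * P - C * (y - n * P * y)
      = (c - C) * y + n * (C - k) * P * (y - C * (x - x * P))
        + x * P * (1 - P) * (n * C\<^sup>2 - k * n * C + 1)"
    by (simp add: algebra_simps power2_eq_square)
  ultimately show ?thesis
    unfolding xn x2n P_def[symmetric] using root by simp
qed

lemma tw_solution_on_invariant_curve:
  fixes n k C :: real and X :: "real \<Rightarrow> real"
  assumes root: "n * C\<^sup>2 - k * n * C + 1 = 0"
    and pos: "\<And>\<xi>. X \<xi> > 0"
    and deriv: "\<And>\<xi>. (X has_real_derivative C * (X \<xi> - X \<xi> powr n)) (at \<xi>)"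
  shows "tw_solution n k (2 * n - 1) n C X (\<lambda>\<xi>. C * (X \<xi> - X \<xi> powr n))"
  unfolding tw_solution_def
proof (intro allI conjI deriv)
  fix \<xi>
  let ?Y = "C * (X \<xi> - X \<xi> powr n)"
  have "((\<lambda>\<xi>. X \<xi> powr n) has_real_derivative n * X \<xi> powr (n - 1) * ?Y) (at \<xi>)"
    by (rule DERIV_chain2[OF has_real_derivative_powr[OF pos] deriv])
  then have "((\<lambda>\<xi>. C * (X \<xi> - X \<xi> powr n)) has_real_derivative
          C * (?Y - n * X \<xi> powr (n - 1) * ?Y)) (at \<xi>)"
    by (intro DERIV_cmult DERIV_diff deriv)
  moreover have "C * (?Y - n * X \<xi> powr (n - 1) * ?Y)
      = C * ?Y - k * n * X \<xi> powr (n - 1) * ?Y - X \<xi> powr (2 * n - 1) + X \<xi> powr n"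
    using tw_field_decomposition[OF pos[of \<xi>] root, of C ?Y] by simp
  ultimately show "((\<lambda>\<xi>. C * (X \<xi> - X \<xi> powr n)) has_real_derivative
      C * ?Y - k * n * X \<xi> powr (n - 1) * ?Y - X \<xi> powr (2 * n - 1) + X \<xi> powr n) (at \<xi>)"
    by simp
qed

lemma connects_directly_at_root:
  fixes n k C :: real
  assumes "n > 1" and "C > 0" and root: "n * C\<^sup>2 - k * n * C + 1 = 0"
  shows "connects_directly n k (2 * n - 1) n C"
proof -
  define m where "m = n - 1"
  have "m > 0" using \<open>n > 1\<close> by (simp add: m_def)
  \<comment> \<open>\<open>X\<^sup>-\<^sup>m = D\<close> solves the Bernoulli equation \<open>X' = C (X - X\<^sup>n)\<close>, which is linear in \<open>X\<^sup>-\<^sup>m\<close>\<close>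
  define D where "D = (\<lambda>\<xi>::real. 1 + exp (- m * C * \<xi>))"
  define X where "X = (\<lambda>\<xi>. exp (- ln (D \<xi>) / m))"
  have D_gt_1: "D \<xi> > 1" for \<xi> by (simp add: D_def)
  have X_pos: "X \<xi> > 0" for \<xi> by (simp add: X_def)
  have X_powr_n: "X \<xi> powr n = X \<xi> / D \<xi>" for \<xi>
  proof -
    have "X \<xi> powr n = exp (- ln (D \<xi>) / m - ln (D \<xi>))"
      using \<open>m > 0\<close> by (simp add: X_def powr_def m_def field_simps)
    also have "\<dots> = X \<xi> / D \<xi>" using D_gt_1[of \<xi>] by (simp add: exp_diff X_def)
    finally show ?thesis .
  qed
  have X_deriv: "(X has_real_derivative C * (X \<xi> - X \<xi> powr n)) (at \<xi>)" for \<xi>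
  proof -
    have "(X has_real_derivative
        X \<xi> * (- (1 / D \<xi> * (exp (- m * C * \<xi>) * (- m * C))) / m)) (at \<xi>)"
      unfolding X_def D_def using \<open>m > 0\<close>
      by (auto intro!: derivative_eq_intros simp: add_pos_pos)
    moreover have "X \<xi> * (- (1 / D \<xi> * (exp (- m * C * \<xi>) * (- m * C))) / m)
        = C * (X \<xi> - X \<xi> powr n)"
      using D_gt_1[of \<xi>] \<open>m > 0\<close> unfolding X_powr_n
      by (simp add: field_simps) (simp add: D_def algebra_simps)
    ultimately show ?thesis by simp
  qed
  define Y where "Y = (\<lambda>\<xi>. C * (X \<xi> - X \<xi> powr n))"
  have "Y \<xi> > 0" for \<xi>
    using \<open>C > 0\<close> X_pos[of \<xi>] D_gt_1[of \<xi>] by (simp add: Y_def X_powr_n field_simps)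
  moreover have "(X \<longlongrightarrow> 0) at_bot" "(X \<longlongrightarrow> 1) at_top"
    and "(Y \<longlongrightarrow> 0) at_bot" "(Y \<longlongrightarrow> 0) at_top"
    unfolding Y_def X_powr_n unfolding X_def D_def using \<open>m > 0\<close> \<open>C > 0\<close> by real_asymp+
  ultimately show ?thesis
    unfolding connects_directly_def Y_def
    using tw_solution_on_invariant_curve[OF root X_pos X_deriv] X_pos
      \<open>(X \<longlongrightarrow> 0) at_bot\<close> \<open>(X \<longlongrightarrow> 1) at_top\<close> by blast
qed

lemma pos_if_tendsto_zero_at_bot_and_DERIV_pos_at_nonpos:
  fixes z z' :: "real \<Rightarrow> real"
  assumes deriv: "\<And>t. (z has_real_derivative z' t) (at t)"
    and deriv_pos: "\<And>t. z t \<le> 0 \<Longrightarrow> z' t > 0"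
    and lim: "(z \<longlongrightarrow> 0) at_bot"
  shows "z t > 0"
proof -
  have not_neg: "\<not> z t < 0" for t
  proof
    assume "z t < 0"
    then have "\<forall>\<^sub>F s in at_bot. z t < z s \<and> s < t"
      using order_tendstoD(1)[OF lim] eventually_gt_at_bot[of t] by (auto intro: eventually_conj)
    then obtain s where s: "z t < z s" "s < t" by (auto dest: eventually_happens)
    have "continuous_on {s..t} z"
      using DERIV_isCont[OF deriv] by (intro continuous_at_imp_continuous_on) blast
    then obtain u where u: "u \<in> {s..t}" and u_min: "\<And>v. v \<in> {s..t} \<Longrightarrow> z u \<le> z v"
      using continuous_attains_inf[of "{s..t}" z] \<open>s < t\<close> by auto
    have "z u < 0" using u_min[of t] \<open>s < t\<close> \<open>z t < 0\<close> by auto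
    have "u \<noteq> s" using u_min[of t] \<open>s < t\<close> s(1) by auto
    obtain d where "d > 0" and d: "\<And>h. 0 < h \<Longrightarrow> h < d \<Longrightarrow> z (u - h) < z u"
      using DERIV_pos_inc_left[OF deriv deriv_pos] \<open>z u < 0\<close> by (meson less_imp_le)
    define h where "h = min (d / 2) (u - s)"
    have "0 < h" "h < d" "u - h \<in> {s..t}" using \<open>d > 0\<close> u \<open>u \<noteq> s\<close> by (auto simp: h_def)
    then have "z (u - h) < z u" and "z u \<le> z (u - h)" using d u_min by auto
    then show False by simp
  qed
  show "z t > 0"
  proof (rule ccontr)
    assume "\<not> z t > 0"
    then have "z t = 0" using not_neg[of t] by simp
    then obtain d where "d > 0" and "\<And>h. 0 < h \<Longrightarrow> h < d \<Longrightarrow> z (t - h) < 0"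
      using DERIV_pos_inc_left[OF deriv deriv_pos, of t] by auto
    then show False using not_neg[of "t - d / 2"] by simp
  qed
qed

lemma less_limit_at_top_if_DERIV_pos:
  fixes X X' :: "real \<Rightarrow> real"
  assumes "\<And>t. (X has_real_derivative X' t) (at t)" and "\<And>t. X' t > 0"
    and "(X \<longlongrightarrow> L) at_top"
  shows "X t < L"
proof -
  have mono: "X s < X t" if "s < t" for s t
    using DERIV_pos_imp_increasing[OF that] assms(1,2) by blast
  then have mono_le: "X s \<le> X t" if "s \<le> t" for s t
    using that by (cases "s = t") (auto intro: less_imp_le)
  have "\<forall>\<^sub>F s in at_top. X (t + 1) \<le> X s"
    using eventually_ge_at_top[of "t + 1"] by (rule eventually_mono) (rule mono_le)
  then have "X (t + 1) \<le> L"
    by (rule tendsto_lowerbound[OF assms(3)]) simp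
  then show ?thesis using mono[of t "t + 1"] by simp
qed

lemma exists_nonpos_if_DERIV_le_neg_one:
  fixes r r' :: "real \<Rightarrow> real"
  assumes "\<And>t. t \<ge> T \<Longrightarrow> (r has_real_derivative r' t) (at t)"
    and "\<And>t. t \<ge> T \<Longrightarrow> r' t \<le> -1"
  shows "\<exists>t\<ge>T. r t \<le> 0"
proof -
  define t where "t = T + \<bar>r T\<bar>"
  have "((\<lambda>s. r s + s) has_real_derivative r' s + 1) (at s)" if "s \<ge> T" for s
    using assms(1)[OF that] by (intro derivative_eq_intros) auto
  then have "r t + t \<le> r T + T"
    using assms(2) by (intro DERIV_nonpos_imp_nonincreasing[of T t]) (fastforce simp: t_def)+
  then show ?thesis by (intro exI[of _ t]) (auto simp: t_def)
qed

lemma eventually_chord_below_curve_at_left_one: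
  fixes n C :: real
  assumes "n > 1" and C: "1 / sqrt (n - 1) < C"
  shows "\<forall>\<^sub>F u in at_left 1. (1 - u) / C < C * (u - u powr n)"
proof -
  have "0 < 1 / sqrt (n - 1)" using \<open>n > 1\<close> by simp
  with C have "C > 0" by linarith
  have "1 < C * sqrt (n - 1)"
    using C \<open>n > 1\<close> by (simp add: divide_less_eq mult.commute)
  then have "1 < (C * sqrt (n - 1))\<^sup>2" by (rule one_less_power) simp
  then have steep: "C\<^sup>2 * (n - 1) > 1"
    using \<open>n > 1\<close> by (simp add: power_mult_distrib)
  define \<psi> where "\<psi> u = C * (u - u powr n) - (1 - u) / C" for u :: real
  have "(\<psi> has_real_derivative C * (1 - n * 1 powr (n - 1)) + 1 / C) (at 1)"
    unfolding \<psi>_def using \<open>C > 0\<close>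
    by (auto intro!: derivative_eq_intros has_real_derivative_powr)
  moreover have "C * (1 - n * 1 powr (n - 1)) + 1 / C < 0"
    using steep \<open>C > 0\<close> by (simp add: field_simps power2_eq_square)
  ultimately obtain d where "d > 0" and d: "\<And>h. 0 < h \<Longrightarrow> h < d \<Longrightarrow> \<psi> 1 < \<psi> (1 - h)"
    using DERIV_neg_dec_left by blast
  have "\<psi> u > 0" if "u \<in> {1 - d<..<1}" for u
    using d[of "1 - u"] that by (simp add: \<psi>_def)
  then show ?thesis
    using eventually_at_left_real[of "1 - d" 1] \<open>d > 0\<close>
    by (auto elim!: eventually_mono simp: \<psi>_def)
qed

lemma tw_solution_deviation_DERIV:
  fixes n k c C :: real and X Y :: "real \<Rightarrow> real"
  assumes sol: "tw_solution n k (2 * n - 1) n c X Y" and "X t > 0"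
    and root: "n * C\<^sup>2 - k * n * C + 1 = 0"
  shows "((\<lambda>t. Y t - C * (X t - X t powr n)) has_real_derivative
          (c - C) * Y t - X t powr (n - 1) * (Y t - C * (X t - X t powr n)) / C) (at t)"
proof -
  have X_deriv: "(X has_real_derivative Y t) (at t)"
    and Y_deriv: "(Y has_real_derivative c * Y t - k * n * X t powr (n - 1) * Y t
                    - X t powr (2 * n - 1) + X t powr n) (at t)"
    using sol by (simp_all add: tw_solution_def)
  have "((\<lambda>t. X t powr n) has_real_derivative n * X t powr (n - 1) * Y t) (at t)"
    by (rule DERIV_chain2[OF has_real_derivative_powr[OF \<open>X t > 0\<close>] X_deriv])
  then have "((\<lambda>t. Y t - C * (X t - X t powr n)) has_real_derivative
      c * Y t - k * n * X t powr (n - 1) * Y t - X t powr (2 * n - 1) + X t powr n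
        - C * (Y t - n * X t powr (n - 1) * Y t)) (at t)"
    by (intro DERIV_diff DERIV_cmult Y_deriv X_deriv)
  then show ?thesis
    unfolding tw_field_decomposition[OF \<open>X t > 0\<close> root] .
qed

lemma deviation_ratio_contradiction:
  fixes X Y z z' :: "real \<Rightarrow> real" and C T :: real
  assumes "C > 0"
    and X_deriv: "\<And>t. (X has_real_derivative Y t) (at t)"
    and z_deriv: "\<And>t. (z has_real_derivative z' t) (at t)"
    and X_lt_1: "\<And>t. X t < 1" and z_pos: "\<And>t. z t > 0" and z'_ge: "\<And>t. z' t \<ge> - z t / C"
    and above: "\<And>t. t \<ge> T \<Longrightarrow> Y t \<ge> z t + (1 - X t) / C"
  shows False
proof -
  define r where "r t = (1 - X t) / z t" for t
  define r' where "r' t = (- Y t * z t - (1 - X t) * z' t) / (z t)\<^sup>2" for t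
  have r_deriv: "(r has_real_derivative r' t) (at t)" for t
    unfolding r_def r'_def using z_pos[of t]
    by (auto intro!: derivative_eq_intros X_deriv z_deriv simp: power2_eq_square)
  have "r' t \<le> -1" if "t \<ge> T" for t
  proof -
    define x where "x = 1 - X t"
    have "x > 0" using X_lt_1[of t] by (simp add: x_def)
    have "Y t * z t \<ge> (z t + x / C) * z t"
      using above[OF that] z_pos[of t] by (simp add: x_def mult_right_mono)
    moreover have "x * z' t \<ge> x * (- z t / C)"
      using \<open>x > 0\<close> z'_ge[of t] by (intro mult_left_mono) simp_all
    ultimately have "- Y t * z t - x * z' t \<le> - (z t)\<^sup>2"
      by (simp add: algebra_simps power2_eq_square)
    then show ?thesis
      using z_pos[of t] by (simp add: r'_def x_def divide_le_eq)
  qed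
  then obtain t where "r t \<le> 0"
    using exists_nonpos_if_DERIV_le_neg_one[of T r r'] r_deriv by blast
  then show False
    using X_lt_1[of t] z_pos[of t] by (simp add: r_def divide_le_0_iff)
qed

lemma not_connects_directly_above_root:
  fixes n k C c :: real
  assumes "n > 1" and root: "n * C\<^sup>2 - k * n * C + 1 = 0"
    and C: "1 / sqrt (n - 1) < C" and "c > C"
  shows "\<not> connects_directly n k (2 * n - 1) n c"
proof
  assume "connects_directly n k (2 * n - 1) n c"
  then obtain X Y where sol: "tw_solution n k (2 * n - 1) n c X Y"
    and pos: "\<And>\<xi>. X \<xi> > 0 \<and> Y \<xi> > 0"
    and X_bot: "(X \<longlongrightarrow> 0) at_bot" and Y_bot: "(Y \<longlongrightarrow> 0) at_bot"
    and X_top: "(X \<longlongrightarrow> 1) at_top"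
    unfolding connects_directly_def by blast
  have "0 < 1 / sqrt (n - 1)" using \<open>n > 1\<close> by simp
  with C have "C > 0" by linarith
  have X_pos: "X t > 0" and Y_pos: "Y t > 0" for t using pos by auto
  have X_deriv: "(X has_real_derivative Y t) (at t)" for t
    using sol by (simp add: tw_solution_def)
  have X_lt_1: "X t < 1" for t
    by (rule less_limit_at_top_if_DERIV_pos[OF X_deriv Y_pos X_top])
  define P where "P t = X t powr (n - 1)" for t
  have P_pos: "P t > 0" and P_le_1: "P t \<le> 1" for t
    using X_pos[of t] X_lt_1[of t] \<open>n > 1\<close> by (auto simp: P_def intro: powr_le1)
  define z where "z t = Y t - C * (X t - X t powr n)" for t
  define z' where "z' t = (c - C) * Y t - P t * z t / C" for t
  have z_deriv: "(z has_real_derivative z' t) (at t)" for t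
    unfolding z'_def P_def z_def[abs_def] by (rule tw_solution_deviation_DERIV[OF sol X_pos root])
  have drift_pos: "(c - C) * Y t > 0" for t
    using \<open>c > C\<close> Y_pos[of t] by simp
  have z_pos: "z t > 0" for t
  proof (rule pos_if_tendsto_zero_at_bot_and_DERIV_pos_at_nonpos[OF z_deriv])
    show "z' t > 0" if "z t \<le> 0" for t
    proof -
      have "P t * z t / C \<le> 0"
        using that P_pos[of t] \<open>C > 0\<close> by (simp add: divide_nonpos_pos mult_nonneg_nonpos)
      then show ?thesis using drift_pos[of t] by (simp add: z'_def)
    qed
    show "(z \<longlongrightarrow> 0) at_bot"
      unfolding z_def using X_bot Y_bot X_pos \<open>n > 1\<close>
      by (auto intro!: tendsto_eq_intros always_eventually less_imp_le)
  qed
  have "z' t \<ge> - z t / C" for t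
  proof -
    have "P t * z t / C \<le> z t / C"
      using P_le_1[of t] z_pos[of t] \<open>C > 0\<close> by (simp add: divide_right_mono mult_left_le_one_le)
    then show ?thesis using drift_pos[of t] by (simp add: z'_def)
  qed
  moreover have "filterlim X (at_left 1) at_top"
    using X_top X_lt_1 by (intro tendsto_imp_filterlim_at_left) auto
  then have "\<forall>\<^sub>F t in at_top. (1 - X t) / C < C * (X t - X t powr n)"
    using eventually_chord_below_curve_at_left_one[OF \<open>n > 1\<close> C] filterlim_iff by blast
  then obtain T where "\<And>t. t \<ge> T \<Longrightarrow> Y t \<ge> z t + (1 - X t) / C"
    unfolding eventually_at_top_linorder z_def by force
  ultimately show False
    using deviation_ratio_contradiction[OF \<open>C > 0\<close> X_deriv z_deriv X_lt_1 z_pos] by blast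
qed

theorem mainTheorem13:
  fixes n k :: real
  assumes "n \<ge> 2"
    and "k > (2 * n - 1) / (n * sqrt (n - 1))"
  shows "{c. connects_directly n k (2 * n - 1) n c} \<noteq> {}
    \<and> bdd_above {c. connects_directly n k (2 * n - 1) n c}
    \<and> critical_velocity n k (2 * n - 1) n = (k * n + sqrt (k\<^sup>2 * n\<^sup>2 - 4 * n)) / (2 * n)"
proof -
  let ?S = "{c. connects_directly n k (2 * n - 1) n c}"
  let ?C = "front_speed n k"
  have "n > 1" using assms(1) by simp
  note bounds = inverse_sqrt_less_front_speed[OF \<open>n > 1\<close> assms(2)]
  have root: "n * ?C\<^sup>2 - k * n * ?C + 1 = 0"
    using bounds(1) \<open>n > 1\<close> by (intro front_speed_root) simp_all
  have "0 < 1 / sqrt (n - 1)" using \<open>n > 1\<close> by simp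
  with bounds(2) have "?C > 0" by linarith
  then have max: "?C \<in> ?S"
    using connects_directly_at_root[OF \<open>n > 1\<close> _ root] by simp
  have upper: "c \<le> ?C" if "c \<in> ?S" for c
    using not_connects_directly_above_root[OF \<open>n > 1\<close> root bounds(2), of c] that by force
  have "bdd_above ?S"
    using upper by (rule bdd_aboveI)
  moreover have "Sup ?S = ?C"
    using max upper by (intro cSup_eq_maximum) blast+
  ultimately show ?thesis
    using max unfolding critical_velocity_def front_speed_def by blast
qed

end
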